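(* Let $d\in\mathbf{N}$. A measure $\mu$ maximizes $E_\infty$ over $\mathcal{P}_{\mathrm{fin}}(\mathbf{S}^d)$ if and only if there is an orthonormal basis $v_1,\dots,v_{d+1}$ of $\mathbf{R}^{d+1}$ such that $\mu\equiv\frac1{d+1}\sum_{i=1}^{d+1}\delta_{v_i}$.
   Context: $\mathbf{S}^d=\{x\in\mathbf{R}^{d+1}:|x|=1\}$. Define $\Lambda^\infty(x,y)=1$ if $x\cdot y=0$ and $0$ otherwise, and for a finite nonnegative Borel measure $\mu$ on $\mathbf{S}^d$, $E_\infty(\mu)=\frac12\iint\Lambda^\infty(x,y)\,d\mu(x)\,d\mu(y)$. $\mathcal{P}_{\mathrm{fin}}(\mathbf{S}^d)$ is the set of Borel probability measures on $\mathbf{S}^d$ with finite support; $\delta_x$ is the Dirac mass at $x$. For finite measures $\mu,\nu$ on $\mathbf{S}^d$, $\mu\equiv\nu$ means there exists an orthogonal matrix $M\in O(d+1)$ such that $\mu(A\cup -A)=\nu(M(A\cup-A))$ for every measurable $A\subseteq\mathbf{S}^d$ (equality up to rotation and identification of antipodal points). *)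

theory Defs
  imports "HOL-Probability.Probability"
begin

text \<open>Points of S^d are unit vectors of real^'n, where CARD('n) = d+1.
  Measures on S^d are represented as Borel measures on real^'n concentrated on the unit sphere.\<close>

definition Lambda_inf :: "real^'n \<Rightarrow> real^'n \<Rightarrow> real" where
  "Lambda_inf x y = (if x \<bullet> y = 0 then 1 else 0)"

definition E_inf :: "(real^'n) measure \<Rightarrow> real" where
  "E_inf \<mu> = (1/2) * (\<integral>x. (\<integral>y. Lambda_inf x y \<partial>\<mu>) \<partial>\<mu>)"

definition P_fin :: "(real^'n) measure set" where
  "P_fin = {\<mu>. sets \<mu> = sets borel \<and> prob_space \<mu> \<and>
      (\<exists>S. finite S \<and> S \<subseteq> sphere 0 1 \<and> emeasure \<mu> (space \<mu> - S) = 0)}"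

text \<open>Equality up to rotation and identification of antipodal points.\<close>
definition meas_equiv :: "(real^'n) measure \<Rightarrow> (real^'n) measure \<Rightarrow> bool" where
  "meas_equiv \<mu> \<nu> \<longleftrightarrow> (\<exists>M::real^'n^'n. orthogonal_matrix M \<and>
     (\<forall>A \<in> sets borel. A \<subseteq> sphere 0 1 \<longrightarrow>
        emeasure \<mu> (A \<union> uminus ` A) = emeasure \<nu> ((\<lambda>x. M *v x) ` (A \<union> uminus ` A))))"

text \<open>The measure (1/(d+1)) \<Sum>i \<delta>_{v i}, as the pushforward of the uniform measure on the index type.\<close>
definition uniform_diracs :: "('n::finite \<Rightarrow> real^'n) \<Rightarrow> (real^'n) measure" where
  "uniform_diracs v = distr (uniform_count_measure (UNIV::'n set)) borel v"

definition orthonormal_basis_fam :: "('n::finite \<Rightarrow> real^'n) \<Rightarrow> bool" where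
  "orthonormal_basis_fam v \<longleftrightarrow> (\<forall>i j. v i \<bullet> v j = (if i = j then 1 else 0))"

definition maximizes_E_inf :: "(real^'n::finite) measure \<Rightarrow> bool" where
  "maximizes_E_inf \<mu> \<longleftrightarrow> \<mu> \<in> P_fin \<and> (\<forall>\<nu>\<in>(P_fin :: (real^'n) measure set). E_inf \<nu> \<le> E_inf \<mu>)"

end

theory Submission imports Defs begin

(* Write a finitely supported probability measure as weights w on a finite set S of unit vectors.
   Then 2 E_inf = 1 - D with D = sum of w x * w y over the pairs with x.y <> 0.  Since
   (x.y)^2 <= 1, D dominates the frame potential sum w x * w y * (x.y)^2, which is the squared
   Frobenius norm of the frame operator G = sum w x * x x^T, and that is at least
   (trace G)^2 / (d+1) = 1/(d+1).  In the equality case non-orthogonal support points are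
   antipodal and G = I/(d+1); testing G against a support point y shows that the line through y
   carries mass 1/(d+1), so there are exactly d+1 such lines, mutually orthogonal.  Conversely a
   measure giving mass 1/(d+1) to each line of an orthonormal basis has D = 1/(d+1). *)

section \<open>Finite frame potential\<close>

lemma sum_sq_sub_scaled_identity:
  fixes G :: "'n::finite \<Rightarrow> 'n \<Rightarrow> real" and c :: real
  shows "(\<Sum>i\<in>UNIV. \<Sum>j\<in>UNIV. (G i j - (if i = j then c else 0))^2)
       = (\<Sum>i\<in>UNIV. \<Sum>j\<in>UNIV. (G i j)^2) - 2 * c * (\<Sum>i\<in>UNIV. G i i) + CARD('n) * c^2"
proof -
  have row: "(\<Sum>j\<in>UNIV. (G i j - (if i = j then c else 0))^2) = (\<Sum>j\<in>UNIV. (G i j)^2) - 2 * c * G i i + c^2" for i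
  proof -
    have "(\<Sum>j\<in>UNIV. (G i j - (if i = j then c else 0))^2)
        = (\<Sum>j\<in>UNIV. (G i j)^2 - (if i = j then 2 * c * G i j - c^2 else 0))"
      by (intro sum.cong) (auto simp: power2_eq_square algebra_simps)
    then show ?thesis by (simp add: sum_subtractf)
  qed
  show ?thesis
    by (simp add: row sum_subtractf sum.distrib sum_distrib_left)
qed

lemma sum_sq_sub_trace_identity:
  fixes G :: "'n::finite \<Rightarrow> 'n \<Rightarrow> real"
  defines "c \<equiv> (\<Sum>i\<in>UNIV. G i i) / CARD('n)"
  shows "CARD('n) * (\<Sum>i\<in>UNIV. \<Sum>j\<in>UNIV. (G i j - (if i = j then c else 0))^2)
       = CARD('n) * (\<Sum>i\<in>UNIV. \<Sum>j\<in>UNIV. (G i j)^2) - (\<Sum>i\<in>UNIV. G i i)^2"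
proof -
  have "CARD('n) * (2 * c * (\<Sum>i\<in>UNIV. G i i) - CARD('n) * c^2) = (\<Sum>i\<in>UNIV. G i i)^2"
    unfolding c_def by (simp add: power2_eq_square)
  then show ?thesis
    unfolding sum_sq_sub_scaled_identity by (simp add: algebra_simps)
qed

lemma trace_sq_le_card_mult_sum_sq:
  fixes G :: "'n::finite \<Rightarrow> 'n \<Rightarrow> real"
  shows "(\<Sum>i\<in>UNIV. G i i)^2 \<le> CARD('n) * (\<Sum>i\<in>UNIV. \<Sum>j\<in>UNIV. (G i j)^2)"
proof -
  have "0 \<le> CARD('n) * (\<Sum>i\<in>UNIV. \<Sum>j\<in>UNIV. (G i j - (if i = j then c else 0))^2)" for c
    by (intro mult_nonneg_nonneg sum_nonneg) simp_all
  from this[of "(\<Sum>i\<in>UNIV. G i i) / CARD('n)"] show ?thesis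
    using sum_sq_sub_trace_identity[of G] by linarith
qed

lemma trace_sq_eq_card_mult_sum_sq_imp:
  fixes G :: "'n::finite \<Rightarrow> 'n \<Rightarrow> real"
  assumes "(\<Sum>i\<in>UNIV. G i i)^2 = CARD('n) * (\<Sum>i\<in>UNIV. \<Sum>j\<in>UNIV. (G i j)^2)"
  shows "G i j = (if i = j then (\<Sum>k\<in>UNIV. G k k) / CARD('n) else 0)"
proof -
  define c where "c = (\<Sum>i\<in>UNIV. G i i) / CARD('n)"
  have "(\<Sum>i\<in>UNIV. \<Sum>j\<in>UNIV. (G i j - (if i = j then c else 0))^2) = 0"
    using sum_sq_sub_trace_identity[of G] assms unfolding c_def by simp
  then have "(G i j - (if i = j then c else 0))^2 = 0"
    by (simp add: sum_nonneg_eq_0_iff sum_nonneg)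
  then show ?thesis unfolding c_def by simp
qed

lemma sum_weighted_inner_sq:
  fixes S :: "(real^'n::finite) set"
  shows "(\<Sum>x\<in>S. w x * (x \<bullet> y)^2) = (\<Sum>i\<in>UNIV. \<Sum>j\<in>UNIV. y$i * y$j * (\<Sum>x\<in>S. w x * x$i * x$j))"
proof -
  have "(\<Sum>x\<in>S. w x * (x \<bullet> y)^2) = (\<Sum>x\<in>S. \<Sum>i\<in>UNIV. \<Sum>j\<in>UNIV. y$i * y$j * (w x * x$i * x$j))"
    by (intro sum.cong refl)
       (simp add: inner_vec_def power2_eq_square sum_product sum_distrib_left mult_ac)
  also have "\<dots> = (\<Sum>i\<in>UNIV. \<Sum>j\<in>UNIV. y$i * y$j * (\<Sum>x\<in>S. w x * x$i * x$j))"
    by (subst sum.swap, subst sum.swap) (simp add: sum_distrib_left sum.swap[of _ S])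
  finally show ?thesis .
qed

lemma frame_potential_eq_sum_sq:
  fixes S :: "(real^'n::finite) set"
  shows "(\<Sum>x\<in>S. \<Sum>y\<in>S. w x * w y * (x \<bullet> y)^2) = (\<Sum>i\<in>UNIV. \<Sum>j\<in>UNIV. (\<Sum>x\<in>S. w x * x$i * x$j)^2)"
proof -
  define G where "G i j = (\<Sum>x\<in>S. w x * x$i * x$j)" for i j
  have "(\<Sum>x\<in>S. \<Sum>y\<in>S. w x * w y * (x \<bullet> y)^2) = (\<Sum>y\<in>S. w y * (\<Sum>x\<in>S. w x * (x \<bullet> y)^2))"
    by (subst sum.swap) (simp add: sum_distrib_left mult_ac)
  also have "\<dots> = (\<Sum>y\<in>S. \<Sum>i\<in>UNIV. \<Sum>j\<in>UNIV. G i j * (w y * y$i * y$j))"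
    unfolding sum_weighted_inner_sq G_def by (simp add: sum_distrib_left mult_ac)
  also have "\<dots> = (\<Sum>i\<in>UNIV. \<Sum>j\<in>UNIV. \<Sum>y\<in>S. G i j * (w y * y$i * y$j))"
    by (subst sum.swap) (intro sum.cong refl sum.swap)
  also have "\<dots> = (\<Sum>i\<in>UNIV. \<Sum>j\<in>UNIV. (G i j)^2)"
    by (simp add: sum_distrib_left[symmetric] G_def power2_eq_square)
  finally show ?thesis unfolding G_def .
qed

lemma frame_trace:
  fixes S :: "(real^'n::finite) set"
  shows "(\<Sum>i\<in>UNIV. \<Sum>x\<in>S. w x * x$i * x$i) = (\<Sum>x\<in>S. w x * (x \<bullet> x))"
  by (subst sum.swap) (simp add: inner_vec_def sum_distrib_left mult_ac)

lemma frame_potential_ge: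
  fixes S :: "(real^'n::finite) set"
  shows "(\<Sum>x\<in>S. w x * (x \<bullet> x))^2 \<le> CARD('n) * (\<Sum>x\<in>S. \<Sum>y\<in>S. w x * w y * (x \<bullet> y)^2)"
  using trace_sq_le_card_mult_sum_sq[of "\<lambda>i j. \<Sum>x\<in>S. w x * x$i * x$j"]
  unfolding frame_potential_eq_sum_sq frame_trace .

lemma frame_potential_eq_imp_tight:
  fixes S :: "(real^'n::finite) set"
  assumes "(\<Sum>x\<in>S. w x * (x \<bullet> x))^2 = CARD('n) * (\<Sum>x\<in>S. \<Sum>y\<in>S. w x * w y * (x \<bullet> y)^2)"
  shows "(\<Sum>x\<in>S. w x * (x \<bullet> y)^2) = (\<Sum>x\<in>S. w x * (x \<bullet> x)) / CARD('n) * (y \<bullet> y)"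
proof -
  define G where "G i j = (\<Sum>x\<in>S. w x * x$i * x$j)" for i j
  have G: "G i j = (if i = j then (\<Sum>x\<in>S. w x * (x \<bullet> x)) / CARD('n) else 0)" for i j
    using trace_sq_eq_card_mult_sum_sq_imp[of G] assms
    unfolding G_def frame_potential_eq_sum_sq frame_trace by simp
  have "(\<Sum>x\<in>S. w x * (x \<bullet> y)^2) = (\<Sum>i\<in>UNIV. \<Sum>j\<in>UNIV. y$i * y$j * G i j)"
    unfolding sum_weighted_inner_sq G_def ..
  also have "\<dots> = (\<Sum>i\<in>UNIV. y$i * y$i * ((\<Sum>x\<in>S. w x * (x \<bullet> x)) / CARD('n)))"
    by (simp add: G if_distrib[where f="\<lambda>t. _ * t"] cong: if_cong)
  also have "\<dots> = (\<Sum>x\<in>S. w x * (x \<bullet> x)) / CARD('n) * (y \<bullet> y)"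
    by (simp add: inner_vec_def sum_distrib_right sum_divide_distrib mult_ac)
  finally show ?thesis .
qed

section \<open>Orthogonal pairs of a weighted point set on the sphere\<close>

lemma unit_inner_sq_eq_1_imp:
  fixes x y :: "'a::real_inner"
  assumes "norm x = 1" "norm y = 1" "(x \<bullet> y)^2 = 1"
  shows "y = x \<or> y = - x"
proof -
  have "\<bar>x \<bullet> y\<bar> = norm x * norm y"
    using assms by (auto simp: power2_eq_1_iff)
  then have "norm x *\<^sub>R y = norm y *\<^sub>R x \<or> norm x *\<^sub>R y = - norm y *\<^sub>R x"
    by (simp only: norm_cauchy_schwarz_abs_eq)
  then show ?thesis using assms(1,2) by simp
qed

lemma inner_sq_le_one_sub_Lambda_inf:
  fixes x y :: "real^'n::finite"
  assumes "norm x = 1" "norm y = 1"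
  shows "(x \<bullet> y)^2 \<le> 1 - Lambda_inf x y"
proof -
  have "\<bar>x \<bullet> y\<bar> \<le> 1"
    using Cauchy_Schwarz_ineq2[of x y] assms by simp
  then show ?thesis by (simp add: Lambda_inf_def abs_square_le_1)
qed

lemma sum_pairs_eq_one_sub:
  assumes "(\<Sum>x\<in>S. w x) = (1::real)"
  shows "(\<Sum>x\<in>S. \<Sum>y\<in>S. w x * w y * f x y) = 1 - (\<Sum>x\<in>S. \<Sum>y\<in>S. w x * w y * (1 - f x y))"
proof -
  have "(\<Sum>x\<in>S. \<Sum>y\<in>S. w x * w y * f x y) + (\<Sum>x\<in>S. \<Sum>y\<in>S. w x * w y * (1 - f x y))
      = (\<Sum>x\<in>S. w x) * (\<Sum>y\<in>S. w y)"
    by (simp add: sum_product sum.distrib[symmetric] algebra_simps)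
  then show ?thesis using assms by simp
qed

lemma frame_potential_le_nonorthogonal_mass:
  fixes S :: "(real^'n::finite) set"
  assumes "S \<subseteq> sphere 0 1" "\<And>x. 0 \<le> w x"
  shows "(\<Sum>x\<in>S. \<Sum>y\<in>S. w x * w y * (x \<bullet> y)^2) \<le> (\<Sum>x\<in>S. \<Sum>y\<in>S. w x * w y * (1 - Lambda_inf x y))"
  using assms by (intro sum_mono mult_left_mono inner_sq_le_one_sub_Lambda_inf) auto

lemma frame_potential_sphere_ge:
  fixes S :: "(real^'n::finite) set"
  assumes "S \<subseteq> sphere 0 1" "(\<Sum>x\<in>S. w x) = 1"
  shows "1 \<le> CARD('n) * (\<Sum>x\<in>S. \<Sum>y\<in>S. w x * w y * (x \<bullet> y)^2)"
    and "1 = CARD('n) * (\<Sum>x\<in>S. \<Sum>y\<in>S. w x * w y * (x \<bullet> y)^2) \<Longrightarrow>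
      (\<Sum>x\<in>S. w x * (x \<bullet> y)^2) = (y \<bullet> y) / CARD('n)"
proof -
  have "x \<bullet> x = 1" if "x \<in> S" for x
    using that assms(1) by (auto simp: norm_eq_1[symmetric])
  then have trace: "(\<Sum>x\<in>S. w x * (x \<bullet> x)) = 1"
    using assms(2) by simp
  show "1 \<le> CARD('n) * (\<Sum>x\<in>S. \<Sum>y\<in>S. w x * w y * (x \<bullet> y)^2)"
    using frame_potential_ge[of w S] unfolding trace by simp
  show "(\<Sum>x\<in>S. w x * (x \<bullet> y)^2) = (y \<bullet> y) / CARD('n)"
    if "1 = CARD('n) * (\<Sum>x\<in>S. \<Sum>y\<in>S. w x * w y * (x \<bullet> y)^2)"
    using frame_potential_eq_imp_tight[of w S y] that unfolding trace by simp
qed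

lemma sum_Lambda_inf_le:
  fixes S :: "(real^'n::finite) set"
  assumes "S \<subseteq> sphere 0 1" "\<And>x. 0 \<le> w x" "(\<Sum>x\<in>S. w x) = 1"
  shows "(\<Sum>x\<in>S. \<Sum>y\<in>S. w x * w y * Lambda_inf x y) \<le> 1 - 1 / CARD('n)"
proof -
  define P where "P = (\<Sum>x\<in>S. \<Sum>y\<in>S. w x * w y * (x \<bullet> y)^2)"
  have "1 \<le> CARD('n) * P"
    unfolding P_def by (rule frame_potential_sphere_ge(1)[OF assms(1,3)])
  then have "1 / CARD('n) \<le> P"
    by (simp add: field_simps)
  moreover have "P \<le> (\<Sum>x\<in>S. \<Sum>y\<in>S. w x * w y * (1 - Lambda_inf x y))"
    unfolding P_def by (rule frame_potential_le_nonorthogonal_mass[of S w, OF assms(1,2)])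
  ultimately show ?thesis
    using sum_pairs_eq_one_sub[OF assms(3), of Lambda_inf] by linarith
qed

lemma sum_Lambda_inf_eq_imp:
  fixes S :: "(real^'n::finite) set"
  assumes S: "finite S" "S \<subseteq> sphere 0 1" and w: "\<And>x. 0 \<le> w x" and one: "(\<Sum>x\<in>S. w x) = 1"
    and eq: "(\<Sum>x\<in>S. \<Sum>y\<in>S. w x * w y * Lambda_inf x y) = 1 - 1 / CARD('n)"
  shows "\<lbrakk>x \<in> S; y \<in> S; 0 < w x; 0 < w y; x \<bullet> y \<noteq> 0\<rbrakk> \<Longrightarrow> y = x \<or> y = - x"
    and "(\<Sum>x\<in>S. w x * (x \<bullet> y)^2) = (y \<bullet> y) / CARD('n)"
proof -
  define P where "P = (\<Sum>x\<in>S. \<Sum>y\<in>S. w x * w y * (x \<bullet> y)^2)"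
  define D where "D = (\<Sum>x\<in>S. \<Sum>y\<in>S. w x * w y * (1 - Lambda_inf x y))"
  have "P \<le> D"
    unfolding P_def D_def by (rule frame_potential_le_nonorthogonal_mass[of S w, OF S(2) w])
  moreover have "1 \<le> CARD('n) * P"
    unfolding P_def by (rule frame_potential_sphere_ge(1)[OF S(2) one])
  then have "1 / CARD('n) \<le> P"
    by (simp add: field_simps)
  moreover have "D = 1 / CARD('n)"
    using sum_pairs_eq_one_sub[OF one, of Lambda_inf] eq unfolding D_def by simp
  ultimately have PD: "P = D" and P: "1 = CARD('n) * P"
    by simp_all
  show "(\<Sum>x\<in>S. w x * (x \<bullet> y)^2) = (y \<bullet> y) / CARD('n)"
    using frame_potential_sphere_ge(2)[OF S(2) one] P unfolding P_def by simp
  assume xy: "x \<in> S" "y \<in> S" "0 < w x" "0 < w y" "x \<bullet> y \<noteq> 0"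
  define gap where "gap a b = w a * w b * (1 - Lambda_inf a b - (a \<bullet> b)^2)" for a b
  have gap_nonneg: "0 \<le> gap a b" if "a \<in> S" "b \<in> S" for a b
  proof -
    have "norm a = 1" "norm b = 1" using that S(2) by auto
    then show ?thesis
      unfolding gap_def by (intro mult_nonneg_nonneg w) (simp add: inner_sq_le_one_sub_Lambda_inf)
  qed
  have "(\<Sum>a\<in>S. \<Sum>b\<in>S. gap a b) = D - P"
    unfolding gap_def D_def P_def by (simp add: sum_subtractf right_diff_distrib)
  then have total: "(\<Sum>a\<in>S. \<Sum>b\<in>S. gap a b) = 0"
    using PD by simp
  have row: "(\<Sum>b\<in>S. gap x b) = 0"
    by (rule sum_nonneg_0[OF S(1) _ total xy(1)]) (auto intro: sum_nonneg gap_nonneg)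
  have "gap x y = 0"
    by (rule sum_nonneg_0[OF S(1) _ row xy(2)]) (auto intro: gap_nonneg xy(1))
  then have "w x * w y * (1 - Lambda_inf x y - (x \<bullet> y)^2) = 0"
    unfolding gap_def .
  then have "(x \<bullet> y)^2 = 1"
    using xy(3-5) by (simp add: Lambda_inf_def)
  moreover have "norm x = 1" "norm y = 1"
    using xy(1,2) S(2) by auto
  ultimately show "y = x \<or> y = - x"
    using unit_inner_sq_eq_1_imp by blast
qed

section \<open>Finitely supported measures on the sphere\<close>

lemma integral_finite_support:
  fixes f :: "'a::t1_space \<Rightarrow> real"
  assumes sM: "sets M = sets borel" and "finite_measure M" and S: "finite S"
    and null: "emeasure M (space M - S) = 0" and f: "f \<in> borel_measurable borel"
  shows "integral\<^sup>L M f = (\<Sum>x\<in>S. f x * measure M {x})"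
proof -
  interpret finite_measure M by fact
  have sp: "space M = UNIV" using sets_eq_imp_space_eq[OF sM] by simp
  have "space M - S \<in> sets M"
    unfolding sM sp by (intro borel_open open_Diff finite_imp_closed S) simp
  then have "space M - S \<in> null_sets M"
    using null by blast
  then have ae: "AE x in M. x \<in> S"
    by (rule AE_I') auto
  have "integral\<^sup>L M f = integral\<^sup>L M (\<lambda>x. \<Sum>s\<in>S. f s * indicator {s} x)"
  proof (rule integral_cong_AE)
    show "f \<in> borel_measurable M"
      using f measurable_cong_sets[OF sM refl] by blast
    show "(\<lambda>x. \<Sum>s\<in>S. f s * indicator {s} x) \<in> borel_measurable M"
      by (intro borel_measurable_sum borel_measurable_times borel_measurable_const
          borel_measurable_indicator) (simp add: sM)
    show "AE x in M. f x = (\<Sum>s\<in>S. f s * indicator {s} x)"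
      using ae by eventually_elim (simp add: S indicator_def)
  qed
  also have "\<dots> = (\<Sum>s\<in>S. f s * measure M {s})"
    by (subst Bochner_Integration.integral_sum)
       (auto intro!: integrable_real_indicator simp: sM emeasure_finite less_top[symmetric])
  finally show ?thesis .
qed

lemma P_fin_finite_support:
  fixes \<mu> :: "(real^'n::finite) measure"
  assumes "\<mu> \<in> P_fin"
  obtains S where "finite S" "S \<subseteq> sphere 0 1" "(\<Sum>x\<in>S. measure \<mu> {x}) = 1"
    "\<And>B. B \<in> sets borel \<Longrightarrow> measure \<mu> B = (\<Sum>x\<in>S. indicator B x * measure \<mu> {x})"
    "E_inf \<mu> = 1/2 * (\<Sum>x\<in>S. \<Sum>y\<in>S. measure \<mu> {x} * measure \<mu> {y} * Lambda_inf x y)"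
proof -
  from assms obtain S where sM: "sets \<mu> = sets borel" and "prob_space \<mu>" and S: "finite S"
    "S \<subseteq> sphere 0 1" and null: "emeasure \<mu> (space \<mu> - S) = 0"
    unfolding P_fin_def by blast
  interpret prob_space \<mu> by fact
  note integral_S = integral_finite_support[OF sM finite_measure_axioms S(1) null]
  have ind: "measure \<mu> B = (\<Sum>x\<in>S. indicator B x * measure \<mu> {x})" if "B \<in> sets borel" for B
    using integral_S[of "indicator B"] that by (simp add: sM)
  have "(\<Sum>x\<in>S. measure \<mu> {x}) = 1"
    using ind[of UNIV] prob_space sets_eq_imp_space_eq[OF sM] by simp
  moreover have "E_inf \<mu> = 1/2 * (\<Sum>x\<in>S. \<Sum>y\<in>S. measure \<mu> {x} * measure \<mu> {y} * Lambda_inf x y)"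
  proof -
    have "(\<integral>y. Lambda_inf x y \<partial>\<mu>) = (\<Sum>y\<in>S. Lambda_inf x y * measure \<mu> {y})" for x
      by (rule integral_S) (simp add: Lambda_inf_def)
    then have "E_inf \<mu> = 1/2 * (\<integral>x. (\<Sum>y\<in>S. Lambda_inf x y * measure \<mu> {y}) \<partial>\<mu>)"
      unfolding E_inf_def by simp
    also have "\<dots> = 1/2 * (\<Sum>x\<in>S. (\<Sum>y\<in>S. Lambda_inf x y * measure \<mu> {y}) * measure \<mu> {x})"
      by (subst integral_S) (simp_all add: Lambda_inf_def)
    finally show ?thesis
      by (simp add: sum_distrib_left sum_distrib_right mult_ac)
  qed
  ultimately show ?thesis using that S ind by blast
qed

lemma E_inf_le:
  fixes \<nu> :: "(real^'n::finite) measure"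
  assumes "\<nu> \<in> P_fin"
  shows "E_inf \<nu> \<le> (1 - 1 / CARD('n)) / 2"
proof -
  obtain S where S: "finite S" "S \<subseteq> sphere 0 1" "(\<Sum>x\<in>S. measure \<nu> {x}) = 1"
    and E: "E_inf \<nu> = 1/2 * (\<Sum>x\<in>S. \<Sum>y\<in>S. measure \<nu> {x} * measure \<nu> {y} * Lambda_inf x y)"
    by (rule P_fin_finite_support[OF assms])
  show ?thesis
    using sum_Lambda_inf_le[OF S(2) measure_nonneg S(3)] unfolding E by simp
qed

section \<open>Measures spread uniformly over the lines of an orthonormal basis\<close>

lemma disjoint_family_on_antipodal_pairs:
  fixes u :: "'i \<Rightarrow> 'a::real_inner"
  assumes "\<And>i. i \<in> I \<Longrightarrow> u i \<noteq> 0" "\<And>i j. i \<in> I \<Longrightarrow> j \<in> I \<Longrightarrow> i \<noteq> j \<Longrightarrow> u i \<bullet> u j = 0"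
  shows "disjoint_family_on (\<lambda>i. B \<inter> {u i, - u i}) I"
  unfolding disjoint_family_on_def
proof (intro ballI impI)
  fix i j assume ij: "i \<in> I" "j \<in> I" "i \<noteq> j"
  have "u j \<noteq> u i" "u j \<noteq> - u i"
    using assms(1)[OF ij(1)] assms(2)[OF ij] by auto
  moreover have "- u j \<noteq> u i" "- u j \<noteq> - u i"
    using calculation by (metis minus_minus)+
  ultimately show "B \<inter> {u i, - u i} \<inter> (B \<inter> {u j, - u j}) = {}"
    by auto
qed

lemma measure_UN_antipodal_pairs:
  fixes u :: "'i \<Rightarrow> 'a::real_inner"
  assumes "finite_measure \<mu>" "sets \<mu> = sets borel" "B \<in> sets borel" "finite I"
    "\<And>i. i \<in> I \<Longrightarrow> u i \<noteq> 0" "\<And>i j. i \<in> I \<Longrightarrow> j \<in> I \<Longrightarrow> i \<noteq> j \<Longrightarrow> u i \<bullet> u j = 0"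
  shows "measure \<mu> (\<Union>i\<in>I. B \<inter> {u i, - u i}) = (\<Sum>i\<in>I. measure \<mu> (B \<inter> {u i, - u i}))"
proof -
  interpret finite_measure \<mu> by fact
  show ?thesis
  proof (rule finite_measure_finite_Union)
    have "B \<inter> {u i, - u i} \<in> sets borel" for i
      by (rule sets.Int[OF assms(3) borel_closed]) simp
    then show "(\<lambda>i. B \<inter> {u i, - u i}) ` I \<subseteq> sets \<mu>"
      using assms(2) by auto
    show "disjoint_family_on (\<lambda>i. B \<inter> {u i, - u i}) I"
      using assms(5,6) by (rule disjoint_family_on_antipodal_pairs)
  qed fact
qed

lemma orthonormal_basis_fam_inner:
  "orthonormal_basis_fam v \<Longrightarrow> v i \<bullet> v j = (if i = j then 1 else 0)"
  unfolding orthonormal_basis_fam_def by blast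

lemma orthonormal_basis_fam_norm:
  "orthonormal_basis_fam v \<Longrightarrow> norm (v i) = 1"
  by (simp add: norm_eq_1 orthonormal_basis_fam_inner)

lemma vimage_antipodal_pair_orthonormal_basis_fam:
  assumes "orthonormal_basis_fam v"
  shows "v -` {v i, - v i} = {i}"
proof -
  have "v j \<bullet> v i \<noteq> 0" if "v j = v i \<or> v j = - v i" for j
    using that orthonormal_basis_fam_inner[OF assms, of i i] by auto
  then show ?thesis
    using orthonormal_basis_fam_inner[OF assms] by (fastforce split: if_splits)
qed

text \<open>Since \<^const>\<open>meas_equiv\<close> only sees antipodally symmetric sets, this is the paper's
  \<open>\<mu> \<equiv> (d+1)\<^sup>-\<^sup>1 \<Sum>\<^sub>i \<delta>\<^sub>v\<^sub>i\<close> with the rotation absorbed into the basis \<open>u\<close>.\<close>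
definition uniform_on_lines :: "(real^'n::finite) measure \<Rightarrow> ('n \<Rightarrow> real^'n) \<Rightarrow> bool" where
  "uniform_on_lines \<mu> u \<longleftrightarrow>
     orthonormal_basis_fam u \<and> (\<forall>i. measure \<mu> {u i, - u i} = 1 / CARD('n))"

lemma measure_UN_lines:
  assumes "finite_measure \<mu>" "sets \<mu> = sets borel" "uniform_on_lines \<mu> u" "B \<in> sets borel"
  shows "measure \<mu> (\<Union>i. B \<inter> {u i, - u i}) = (\<Sum>i\<in>UNIV. measure \<mu> (B \<inter> {u i, - u i}))"
proof -
  have onb: "orthonormal_basis_fam u"
    using assms(3) by (simp add: uniform_on_lines_def)
  show ?thesis
    using orthonormal_basis_fam_norm[OF onb] orthonormal_basis_fam_inner[OF onb]
    by (intro measure_UN_antipodal_pairs[OF assms(1,2,4)]) (auto, metis norm_zero zero_neq_one)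
qed

lemma AE_in_lines:
  assumes "prob_space \<mu>" "sets \<mu> = sets borel" "uniform_on_lines \<mu> u"
  shows "AE x in \<mu>. \<exists>i. x = u i \<or> x = - u i"
proof -
  interpret prob_space \<mu> by fact
  have "measure \<mu> (\<Union>i. {u i, - u i}) = 1"
    using measure_UN_lines[OF finite_measure_axioms assms(2,3), of UNIV] assms(3)
    by (simp add: uniform_on_lines_def)
  then have "AE x in \<mu>. x \<in> (\<Union>i. {u i, - u i})"
    by (rule AE_prob_1)
  then show ?thesis
    by eventually_elim auto
qed

lemma measure_eq_sum_lines:
  assumes "prob_space \<mu>" "sets \<mu> = sets borel" "uniform_on_lines \<mu> u" "B \<in> sets borel"
  shows "measure \<mu> B = (\<Sum>i\<in>UNIV. measure \<mu> (B \<inter> {u i, - u i}))"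
proof -
  interpret prob_space \<mu> by fact
  have "(\<Union>i. B \<inter> {u i, - u i}) \<in> sets borel"
    by (intro sets.finite_UN finite_UNIV sets.Int[OF assms(4) borel_closed]) simp_all
  then have "measure \<mu> B = measure \<mu> (\<Union>i. B \<inter> {u i, - u i})"
    using AE_in_lines[OF assms(1-3)] assms(2,4) by (intro finite_measure_eq_AE) auto
  then show ?thesis
    using measure_UN_lines[OF finite_measure_axioms assms(2-4)] by simp
qed

lemma E_inf_uniform_on_lines:
  fixes \<mu> :: "(real^'n::finite) measure"
  assumes "prob_space \<mu>" "sets \<mu> = sets borel" "uniform_on_lines \<mu> u"
  shows "E_inf \<mu> = (1 - 1 / CARD('n)) / 2"
proof -
  interpret prob_space \<mu> by fact
  have onb: "orthonormal_basis_fam u"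
    using assms(3) by (simp add: uniform_on_lines_def)
  have space: "space \<mu> = UNIV"
    using sets_eq_imp_space_eq[OF assms(2)] by simp
  have orthogonal_mass: "(\<integral>y. Lambda_inf x y \<partial>\<mu>) = 1 - 1 / CARD('n)" if x: "x = u k \<or> x = - u k" for x k
  proof -
    have "{y. x \<bullet> y \<noteq> 0} \<inter> {u i, - u i} = (if i = k then {u i, - u i} else {})" for i
      using x orthonormal_basis_fam_inner[OF onb, of k] by auto
    then have "measure \<mu> {y. x \<bullet> y \<noteq> 0} = 1 / CARD('n)"
      using measure_eq_sum_lines[OF assms, of "{y. x \<bullet> y \<noteq> 0}"] assms(3)
      by (simp add: uniform_on_lines_def if_distrib[of "measure \<mu>"] cong: if_cong)
    moreover have "(\<integral>y. Lambda_inf x y \<partial>\<mu>) = prob (space \<mu> - {y. x \<bullet> y \<noteq> 0})"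
    proof -
      have "Lambda_inf x = indicator (space \<mu> - {y. x \<bullet> y \<noteq> 0})"
        by (auto simp: Lambda_inf_def space fun_eq_iff)
      then show ?thesis by (simp add: space)
    qed
    ultimately show ?thesis
      by (subst (asm) prob_compl) (simp_all add: assms(2))
  qed
  have "(\<lambda>x. \<integral>y. Lambda_inf x y \<partial>\<mu>) \<in> borel_measurable \<mu>"
  proof (rule sigma_finite_measure.borel_measurable_lebesgue_integral)
    show "(\<lambda>(x, y). Lambda_inf x y) \<in> borel_measurable (\<mu> \<Otimes>\<^sub>M \<mu>)"
      unfolding measurable_cong_sets[OF sets_pair_measure_cong[OF assms(2) assms(2)] refl]
      unfolding Lambda_inf_def by measurable
  qed unfold_locales
  moreover have "AE x in \<mu>. (\<integral>y. Lambda_inf x y \<partial>\<mu>) = 1 - 1 / CARD('n)"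
    using AE_in_lines[OF assms] by eventually_elim (use orthogonal_mass in blast)
  ultimately have "(\<integral>x. (\<integral>y. Lambda_inf x y \<partial>\<mu>) \<partial>\<mu>) = (\<integral>x. 1 - 1 / CARD('n) \<partial>\<mu>)"
    by (intro integral_cong_AE) simp_all
  then show ?thesis
    unfolding E_inf_def by (simp add: prob_space)
qed

lemma sets_uniform_diracs [simp]: "sets (uniform_diracs v) = sets borel"
  unfolding uniform_diracs_def by simp

lemma prob_space_uniform_diracs: "prob_space (uniform_diracs v)"
  unfolding uniform_diracs_def
  by (intro prob_space.prob_space_distr prob_space_uniform_count_measure)
     (auto simp: measurable_def space_uniform_count_measure)

lemma emeasure_uniform_diracs:
  fixes v :: "'n::finite \<Rightarrow> real^'n"
  assumes "B \<in> sets borel"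
  shows "emeasure (uniform_diracs v) B = card (v -` B) / CARD('n)"
  unfolding uniform_diracs_def using assms
  by (subst emeasure_distr)
     (auto simp: measurable_def space_uniform_count_measure emeasure_uniform_count_measure)

lemma measure_uniform_diracs:
  fixes v :: "'n::finite \<Rightarrow> real^'n"
  assumes "B \<in> sets borel"
  shows "measure (uniform_diracs v) B = card (v -` B) / CARD('n)"
  using emeasure_uniform_diracs[OF assms] by (simp add: measure_def)

lemma uniform_on_lines_uniform_diracs:
  "orthonormal_basis_fam v \<Longrightarrow> uniform_on_lines (uniform_diracs v) v"
  by (simp add: uniform_on_lines_def measure_uniform_diracs vimage_antipodal_pair_orthonormal_basis_fam)

lemma uniform_diracs_in_P_fin:
  assumes "orthonormal_basis_fam v"
  shows "uniform_diracs v \<in> P_fin"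
  unfolding P_fin_def
proof (intro CollectI conjI exI[of _ "range v"] sets_uniform_diracs prob_space_uniform_diracs)
  show "finite (range v)" "range v \<subseteq> sphere 0 1"
    using orthonormal_basis_fam_norm[OF assms] by auto
  have "space (uniform_diracs v) = UNIV"
    using sets_eq_imp_space_eq[OF sets_uniform_diracs] by simp
  moreover have "UNIV - range v \<in> sets borel"
    by (simp add: borel_open open_Diff finite_imp_closed)
  moreover have "v -` (UNIV - range v) = {}"
    by auto
  ultimately show "emeasure (uniform_diracs v) (space (uniform_diracs v) - range v) = 0"
    by (simp add: emeasure_uniform_diracs)
qed

lemma meas_equiv_uniform_on_lines:
  fixes \<mu> :: "(real^'n::finite) measure"
  assumes "prob_space \<mu>" "sets \<mu> = sets borel" "uniform_on_lines \<mu> u"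
  shows "meas_equiv \<mu> (uniform_diracs u)"
  unfolding meas_equiv_def
proof (intro exI[of _ "mat 1"] conjI orthogonal_matrix_id ballI impI)
  fix A :: "(real^'n) set"
  define B where "B = A \<union> uminus ` A"
  have "emeasure \<mu> B = emeasure (uniform_diracs u) B"
  proof (cases "B \<in> sets borel")
    case True
    have "- x \<in> B \<longleftrightarrow> x \<in> B" for x
      unfolding B_def by (auto simp: image_iff) (metis minus_minus)+
    then have "B \<inter> {u i, - u i} = (if u i \<in> B then {u i, - u i} else {})" for i
      by auto
    then have "measure \<mu> B = card (u -` B) / CARD('n)"
      using measure_eq_sum_lines[OF assms True] assms(3)
      by (simp add: uniform_on_lines_def if_distrib[of "measure \<mu>"] sum.If_cases vimage_def cong: if_cong)
    then have "measure \<mu> B = measure (uniform_diracs u) B"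
      by (simp add: measure_uniform_diracs True)
    then show ?thesis
      using prob_space_uniform_diracs assms(1)
      by (metis finite_measure.emeasure_eq_measure prob_space.finite_measure)
  next
    case False
    then show ?thesis by (simp add: emeasure_notin_sets assms(2))
  qed
  then show "emeasure \<mu> (A \<union> uminus ` A) = emeasure (uniform_diracs u) ((\<lambda>x. mat 1 *v x) ` (A \<union> uminus ` A))"
    unfolding B_def by simp
qed

lemma orthogonal_matrix_inner:
  fixes M :: "real^'n^'n"
  assumes "orthogonal_matrix M"
  shows "(M *v a) \<bullet> (M *v b) = a \<bullet> b"
proof -
  have "(M *v a) \<bullet> (M *v b) = a \<bullet> ((transpose M ** M) *v b)"
    by (metis dot_lmul_matrix matrix_vector_mul_assoc transpose_matrix_vector transpose_transpose)
  then show ?thesis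
    using assms by (simp add: orthogonal_matrix)
qed

lemma uniform_on_lines_of_meas_equiv:
  fixes \<mu> :: "(real^'n::finite) measure"
  assumes "orthonormal_basis_fam v" "meas_equiv \<mu> (uniform_diracs v)"
  obtains u where "uniform_on_lines \<mu> u"
proof -
  obtain M :: "real^'n^'n" where orth: "orthogonal_matrix M" and equiv:
    "\<And>A. A \<in> sets borel \<Longrightarrow> A \<subseteq> sphere 0 1 \<Longrightarrow>
      emeasure \<mu> (A \<union> uminus ` A) = emeasure (uniform_diracs v) ((\<lambda>x. M *v x) ` (A \<union> uminus ` A))"
    using assms(2) unfolding meas_equiv_def by blast
  define u where "u i = transpose M *v v i" for i
  have Mu: "M *v u i = v i" for i
    using orth unfolding u_def matrix_vector_mul_assoc orthogonal_matrix_def by simp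
  have onb: "orthonormal_basis_fam u"
    using assms(1) orthogonal_matrix_inner[of "transpose M"] orth
    unfolding orthonormal_basis_fam_def u_def by simp
  have mass: "measure \<mu> {u i, - u i} = 1 / CARD('n)" for i
  proof -
    have "M *v (- u i) = - v i"
      using matrix_vector_mult_diff_distrib[of M 0 "u i"] Mu by simp
    then have "(\<lambda>x. M *v x) ` ({u i} \<union> uminus ` {u i}) = {v i, - v i}"
      using Mu by (simp add: insert_commute)
    moreover have "{u i} \<subseteq> sphere 0 1"
      using orthonormal_basis_fam_norm[OF onb] by simp
    ultimately have "emeasure \<mu> {u i, - u i} = emeasure (uniform_diracs v) {v i, - v i}"
      using equiv[of "{u i}"] by (simp add: insert_commute)
    then show ?thesis
      by (simp add: measure_def emeasure_uniform_diracs vimage_antipodal_pair_orthonormal_basis_fam[OF assms(1)])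
  qed
  show ?thesis
    by (rule that[of u]) (simp add: uniform_on_lines_def onb mass)
qed

lemma obtain_orthogonal_representatives:
  fixes T :: "'a::real_inner set"
  assumes "finite T" and antipodal: "\<And>x y. x \<in> T \<Longrightarrow> y \<in> T \<Longrightarrow> x \<bullet> y \<noteq> 0 \<Longrightarrow> y = x \<or> y = - x"
  obtains R where "R \<subseteq> T" "pairwise orthogonal R" "T \<subseteq> (\<Union>r\<in>R. {r, - r})"
proof -
  define F where "F = {R. R \<subseteq> T \<and> pairwise orthogonal R}"
  have "finite F" "{} \<in> F"
    using assms(1) unfolding F_def by (auto intro: finite_subset[of _ "Pow T"])
  then obtain R where R: "R \<in> F" and maximal: "\<And>R'. R' \<in> F \<Longrightarrow> R \<subseteq> R' \<Longrightarrow> R = R'"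
    using finite_has_maximal[of F] by blast
  have "x \<in> (\<Union>r\<in>R. {r, - r})" if x: "x \<in> T" for x
  proof (rule ccontr)
    assume uncovered: "x \<notin> (\<Union>r\<in>R. {r, - r})"
    have "orthogonal x r" if r: "r \<in> R" for r
    proof (rule ccontr)
      assume "\<not> orthogonal x r"
      then have "r = x \<or> r = - x"
        using antipodal[OF x, of r] r R unfolding F_def orthogonal_def by auto
      then show False
        using uncovered r by auto
    qed
    then have "insert x R \<in> F"
      using R x unfolding F_def by (auto simp: pairwise_insert orthogonal_commute)
    then show False
      using maximal[of "insert x R"] uncovered by auto
  qed
  then show ?thesis
    using R that unfolding F_def by blast
qed

lemma uniform_on_lines_of_maximizer:
  fixes \<mu> :: "(real^'n::finite) measure"
  assumes "\<mu> \<in> P_fin" and E: "(1 - 1 / CARD('n)) / 2 \<le> E_inf \<mu>"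
  obtains u where "uniform_on_lines \<mu> u"
proof -
  obtain S where S: "finite S" "S \<subseteq> sphere 0 1" and one: "(\<Sum>x\<in>S. measure \<mu> {x}) = 1"
    and ind: "\<And>B. B \<in> sets borel \<Longrightarrow> measure \<mu> B = (\<Sum>x\<in>S. indicator B x * measure \<mu> {x})"
    and E_sum: "E_inf \<mu> = 1/2 * (\<Sum>x\<in>S. \<Sum>y\<in>S. measure \<mu> {x} * measure \<mu> {y} * Lambda_inf x y)"
    by (rule P_fin_finite_support[OF assms(1)]) blast
  define w where "w x = measure \<mu> {x}" for x
  have w: "0 \<le> w x" for x
    unfolding w_def by simp
  have "1 - 1 / CARD('n) \<le> (\<Sum>x\<in>S. \<Sum>y\<in>S. w x * w y * Lambda_inf x y)"
    using E unfolding E_sum w_def by simp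
  then have "(\<Sum>x\<in>S. \<Sum>y\<in>S. w x * w y * Lambda_inf x y) = 1 - 1 / CARD('n)"
    using sum_Lambda_inf_le[OF S(2) w one[folded w_def]] by (rule antisym[rotated])
  note extremal = sum_Lambda_inf_eq_imp[OF S w one[folded w_def] this]
  define T where "T = {x \<in> S. 0 < w x}"
  have unit: "x \<bullet> x = 1" if "x \<in> T" for x
    using that S(2) unfolding T_def by (auto simp: norm_eq_1[symmetric])
  have line_mass: "measure \<mu> {y, - y} = 1 / CARD('n)" if y: "y \<in> T" for y
  proof -
    have termwise: "indicator {y, - y} x * w x = w x * (x \<bullet> y)^2" if "x \<in> S" for x
    proof (cases "x \<in> T")
      case True
      then show ?thesis
        using extremal(1)[of y x] y unit[of y] unfolding T_def
        by (cases "x \<bullet> y = 0") (auto simp: inner_commute indicator_def)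
    next
      case False
      then show ?thesis using that w[of x] unfolding T_def by simp
    qed
    have "measure \<mu> {y, - y} = (\<Sum>x\<in>S. indicator {y, - y} x * w x)"
      using ind[of "{y, - y}"] unfolding w_def by simp
    also have "\<dots> = (\<Sum>x\<in>S. w x * (x \<bullet> y)^2)"
      using termwise by (rule sum.cong[OF refl])
    also have "\<dots> = 1 / CARD('n)"
      using extremal(2)[of y] unit[OF y] by simp
    finally show ?thesis .
  qed
  obtain R where R: "R \<subseteq> T" "pairwise orthogonal R" "T \<subseteq> (\<Union>r\<in>R. {r, - r})"
    using obtain_orthogonal_representatives[of T] extremal(1) S(1) unfolding T_def by auto
  have finite_R: "finite R"
    using R(1) S(1) unfolding T_def by (auto intro: finite_subset)
  have R_ne_0: "r \<noteq> 0" if "r \<in> R" for r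
    using unit[of r] R(1) that by auto
  have "measure \<mu> (\<Union>r\<in>R. {r, - r}) = 1"
  proof -
    have covered: "indicator (\<Union>r\<in>R. {r, - r}) x * w x = w x" if "x \<in> S" for x
      using that R(3) w[of x] unfolding T_def by (cases "0 < w x") (auto simp: indicator_def)
    have "(\<Union>r\<in>R. {r, - r}) \<in> sets borel"
      using finite_R by (simp add: sets.finite_UN finite_imp_closed borel_closed)
    then have "measure \<mu> (\<Union>r\<in>R. {r, - r}) = (\<Sum>x\<in>S. indicator (\<Union>r\<in>R. {r, - r}) x * w x)"
      using ind unfolding w_def by blast
    also have "\<dots> = (\<Sum>x\<in>S. w x)"
      using covered by (rule sum.cong[OF refl])
    finally show ?thesis
      using one unfolding w_def by simp
  qed
  moreover have "measure \<mu> (\<Union>r\<in>R. {r, - r}) = card R / CARD('n)"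
  proof -
    have "prob_space \<mu>" "sets \<mu> = sets borel"
      using assms(1) unfolding P_fin_def by auto
    then have "measure \<mu> (\<Union>r\<in>R. UNIV \<inter> {r, - r}) = (\<Sum>r\<in>R. measure \<mu> (UNIV \<inter> {r, - r}))"
      using finite_R R_ne_0 R(2)
      by (intro measure_UN_antipodal_pairs) (auto simp: prob_space.finite_measure pairwise_def orthogonal_def)
    also have "\<dots> = (\<Sum>r\<in>R. 1 / CARD('n))"
      using line_mass R(1) by (intro sum.cong) auto
    finally show ?thesis
      by simp
  qed
  ultimately have "card R = CARD('n)"
    by simp
  then obtain u :: "'n \<Rightarrow> real^'n" where u: "bij_betw u UNIV R"
    using finite_same_card_bij[of "UNIV :: 'n set" R] finite_R by auto
  have "orthonormal_basis_fam u"
    unfolding orthonormal_basis_fam_def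
  proof (intro allI)
    fix i j
    have "u i \<in> R" "u j \<in> R" "i \<noteq> j \<Longrightarrow> u i \<noteq> u j"
      using u by (auto simp: bij_betw_def inj_eq)
    then show "u i \<bullet> u j = (if i = j then 1 else 0)"
      using unit R(1,2) by (auto simp: pairwise_def orthogonal_def)
  qed
  moreover have "measure \<mu> {u i, - u i} = 1 / CARD('n)" for i
    using line_mass R(1) u by (auto simp: bij_betw_def)
  ultimately show ?thesis
    by (intro that[of u]) (simp add: uniform_on_lines_def)
qed

theorem theorem3p2:
  fixes \<mu> :: "(real^'n::finite) measure"
  assumes "\<mu> \<in> P_fin"
  shows "maximizes_E_inf \<mu> \<longleftrightarrow>
    (\<exists>v::'n \<Rightarrow> real^'n. orthonormal_basis_fam v \<and> meas_equiv \<mu> (uniform_diracs v))"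
proof -
  have \<mu>: "prob_space \<mu>" "sets \<mu> = sets borel"
    using assms unfolding P_fin_def by auto
  show ?thesis
  proof
    assume max: "maximizes_E_inf \<mu>"
    have axes: "orthonormal_basis_fam (\<lambda>i. axis i 1 :: real^'n)"
      by (simp add: orthonormal_basis_fam_def inner_axis_axis)
    have "E_inf (uniform_diracs (\<lambda>i. axis i 1 :: real^'n)) = (1 - 1 / CARD('n)) / 2"
      by (rule E_inf_uniform_on_lines[OF prob_space_uniform_diracs sets_uniform_diracs
            uniform_on_lines_uniform_diracs[OF axes]])
    then have "(1 - 1 / CARD('n)) / 2 \<le> E_inf \<mu>"
      using max uniform_diracs_in_P_fin[OF axes] unfolding maximizes_E_inf_def by metis
    then obtain u where "uniform_on_lines \<mu> u"
      using uniform_on_lines_of_maximizer[OF assms] by blast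
    then show "\<exists>v. orthonormal_basis_fam v \<and> meas_equiv \<mu> (uniform_diracs v)"
      using meas_equiv_uniform_on_lines[OF \<mu>] by (auto simp: uniform_on_lines_def)
  next
    assume "\<exists>v. orthonormal_basis_fam v \<and> meas_equiv \<mu> (uniform_diracs v)"
    then obtain u where "uniform_on_lines \<mu> u"
      using uniform_on_lines_of_meas_equiv by metis
    then have max: "E_inf \<mu> = (1 - 1 / CARD('n)) / 2"
      by (rule E_inf_uniform_on_lines[OF \<mu>])
    show "maximizes_E_inf \<mu>"
      unfolding maximizes_E_inf_def
    proof (intro conjI ballI assms)
      fix \<nu> :: "(real^'n) measure"
      assume "\<nu> \<in> P_fin"
      then show "E_inf \<nu> \<le> E_inf \<mu>"
        unfolding max by (rule E_inf_le)
    qed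
  qed
qed

end
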